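(* Let $f,g:\mathbb{R}^d\to\mathbb{R}$ be measurable with $\exp(-g)\in L_1(\mathbb{R}^d)$, $\exp(-f)$ essentially bounded from above, and $\int\exp(-f(x)-g(x))\,\mathrm dx>0$. For $\eta>0$ define the probability densities $$\pi_\eta^X(x)\propto\int\exp\Big[-f(x)-g(y)-\frac{1}{2\eta}\|x-y\|_2^2\Big]\mathrm dy,\qquad \nu(x)\propto\exp[-f(x)-g(x)].$$ Then $\lim_{\eta\to0}\mathrm{TV}(\pi_\eta^X,\nu)=0$.
   Context: $\mathrm{TV}(\mu,\nu)=\frac12\|\mu-\nu\|_1$ for probability densities $\mu,\nu$. *)

theory Defs
  imports "HOL-Analysis.Analysis"
begin

definition piX_unnorm :: "('a::euclidean_space \<Rightarrow> real) \<Rightarrow> ('a \<Rightarrow> real) \<Rightarrow> real \<Rightarrow> 'a \<Rightarrow> real" where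
  "piX_unnorm f g \<eta> x =
     (\<integral>y. exp (- f x - g y - (norm (x - y))\<^sup>2 / (2 * \<eta>)) \<partial>lborel)"

definition piX :: "('a::euclidean_space \<Rightarrow> real) \<Rightarrow> ('a \<Rightarrow> real) \<Rightarrow> real \<Rightarrow> 'a \<Rightarrow> real" where
  "piX f g \<eta> x = piX_unnorm f g \<eta> x / (\<integral>z. piX_unnorm f g \<eta> z \<partial>lborel)"

definition nu_dens :: "('a::euclidean_space \<Rightarrow> real) \<Rightarrow> ('a \<Rightarrow> real) \<Rightarrow> 'a \<Rightarrow> real" where
  "nu_dens f g x = exp (- f x - g x) / (\<integral>z. exp (- f z - g z) \<partial>lborel)"

definition TV :: "('a::euclidean_space \<Rightarrow> real) \<Rightarrow> ('a \<Rightarrow> real) \<Rightarrow> real" where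
  "TV \<mu> \<nu> = (1/2) * (\<integral>x. \<bar>\<mu> x - \<nu> x\<bar> \<partial>lborel)"

end

theory Submission
  imports Defs "HOL-Probability.Distributions"
begin

text \<open>
  Up to a constant factor, \<open>\<pi>\<^sub>\<eta>\<^sup>X\<close> is \<open>exp (- f)\<close> times the convolution \<open>u\<^sub>\<eta>\<close> of
  \<open>h = exp (- g)\<close> with the centred Gaussian density of variance \<open>\<eta>\<close>, normalised to mass one,
  while \<open>\<nu>\<close> is \<open>exp (- f) * h\<close>, normalised. Translation is continuous in \<open>L\<^sub>1\<close> and the
  Gaussian mass concentrates at the origin as \<open>\<eta> \<rightarrow> 0\<close>, so \<open>u\<^sub>\<eta> \<rightarrow> h\<close> in \<open>L\<^sub>1\<close>.
  Multiplication by the essentially bounded \<open>exp (- f)\<close> preserves this, and normalising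
  costs nothing essential: \<open>TV (P / \<integral>P, Q / \<integral>Q) \<le> \<parallel>P - Q\<parallel>\<^sub>1 / \<integral>Q\<close> for \<open>P \<ge> 0\<close>.
\<close>

lemma integrable_lborel_translate:
  fixes f :: "'a::euclidean_space \<Rightarrow> real"
  assumes "integrable lborel f"
  shows "integrable lborel (\<lambda>x. f (x + z))"
proof -
  have [measurable]: "f \<in> borel_measurable borel" using assms by auto
  have "integrable (distr lborel borel ((+) z)) f" by (simp add: lborel_distr_plus assms)
  then show ?thesis by (subst (asm) integrable_distr_eq) (auto simp: add.commute)
qed

lemma integral_lborel_translate:
  fixes f :: "'a::euclidean_space \<Rightarrow> real"
  assumes [measurable]: "f \<in> borel_measurable borel"
  shows "(\<integral>x. f (x + z) \<partial>lborel) = (\<integral>x. f x \<partial>lborel)"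
proof -
  have "(\<integral>x. f x \<partial>lborel) = (\<integral>x. f x \<partial>distr lborel borel ((+) z))"
    by (simp add: lborel_distr_plus)
  also have "\<dots> = (\<integral>x. f (x + z) \<partial>lborel)"
    by (subst integral_distr) (auto simp: add.commute)
  finally show ?thesis ..
qed

lemma nn_integral_lborel_scaleR:
  fixes f :: "'a::euclidean_space \<Rightarrow> ennreal"
  assumes [measurable]: "f \<in> borel_measurable borel" and "c > 0"
  shows "(\<integral>\<^sup>+x. f x \<partial>lborel) = ennreal (c ^ DIM('a)) * (\<integral>\<^sup>+x. f (c *\<^sub>R x) \<partial>lborel)"
proof -
  have "(\<integral>\<^sup>+x. f x \<partial>lborel) =
      (\<integral>\<^sup>+x. f x \<partial>density (distr lborel borel (\<lambda>x. 0 + c *\<^sub>R x)) (\<lambda>_. \<bar>c\<bar> ^ DIM('a)))"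
    using lborel_affine[of c "0::'a"] \<open>c > 0\<close> by simp
  also have "\<dots> = (\<integral>\<^sup>+x. ennreal (c ^ DIM('a)) * f (c *\<^sub>R x) \<partial>lborel)"
    using \<open>c > 0\<close> by (simp add: nn_integral_density nn_integral_distr)
  also have "\<dots> = ennreal (c ^ DIM('a)) * (\<integral>\<^sup>+x. f (c *\<^sub>R x) \<partial>lborel)"
    by (rule nn_integral_cmult) simp
  finally show ?thesis .
qed

lemma integral_lborel_pos:
  fixes f :: "'a::euclidean_space \<Rightarrow> real"
  assumes f: "integrable lborel f" and pos: "\<And>x. 0 < f x"
  shows "0 < (\<integral>x. f x \<partial>lborel)"
proof -
  have "\<not> (AE x in lborel. f x = 0)"
  proof
    assume "AE x in lborel. f x = 0"
    then have "UNIV \<in> null_sets (lborel :: 'a measure)"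
      using pos AE_iff_null_sets[of UNIV "lborel :: 'a measure"] by (simp add: less_imp_neq[symmetric])
    then have "emeasure (lborel :: 'a measure) UNIV = 0" by auto
    then show False by simp
  qed
  then show ?thesis
    using integral_nonneg_eq_0_iff_AE[OF f] integral_nonneg_AE[of f] pos
    by (metis AE_I2 less_eq_real_def)
qed

section \<open>Continuity of translation in \<open>L\<^sub>1\<close>\<close>

definition L1_shift_dist :: "('a::euclidean_space \<Rightarrow> real) \<Rightarrow> 'a \<Rightarrow> real" where
  "L1_shift_dist h z = (\<integral>x. \<bar>h (x + z) - h x\<bar> \<partial>lborel)"

lemma L1_shift_dist_nonneg: "0 \<le> L1_shift_dist h z"
  unfolding L1_shift_dist_def by (rule integral_nonneg_AE) simp

lemma integrable_shift_diff:
  fixes h :: "'a::euclidean_space \<Rightarrow> real"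
  assumes "integrable lborel h"
  shows "integrable lborel (\<lambda>x. \<bar>h (x + z) - h x\<bar>)"
  using integrable_lborel_translate[OF assms] assms by auto

lemma L1_shift_dist_le:
  fixes h :: "'a::euclidean_space \<Rightarrow> real"
  assumes h: "integrable lborel h"
  shows "L1_shift_dist h z \<le> 2 * (\<integral>x. \<bar>h x\<bar> \<partial>lborel)"
proof -
  have [measurable]: "h \<in> borel_measurable borel" using h by auto
  have "L1_shift_dist h z \<le> (\<integral>x. \<bar>h (x + z)\<bar> + \<bar>h x\<bar> \<partial>lborel)"
    unfolding L1_shift_dist_def
    by (rule integral_mono) (use h integrable_lborel_translate[OF h] integrable_shift_diff[OF h] in auto)
  also have "\<dots> = (\<integral>x. \<bar>h (x + z)\<bar> \<partial>lborel) + (\<integral>x. \<bar>h x\<bar> \<partial>lborel)"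
    using h integrable_lborel_translate[OF h] by (intro Bochner_Integration.integral_add) auto
  also have "(\<integral>x. \<bar>h (x + z)\<bar> \<partial>lborel) = (\<integral>x. \<bar>h x\<bar> \<partial>lborel)"
    by (rule integral_lborel_translate[of "\<lambda>x. \<bar>h x\<bar>"]) simp
  finally show ?thesis by simp
qed

lemma L1_shift_dist_add_le:
  fixes f g :: "'a::euclidean_space \<Rightarrow> real"
  assumes f: "integrable lborel f" and g: "integrable lborel g"
  shows "L1_shift_dist (\<lambda>x. f x + g x) z \<le> L1_shift_dist f z + L1_shift_dist g z"
proof -
  have "L1_shift_dist (\<lambda>x. f x + g x) z \<le> (\<integral>x. \<bar>f (x + z) - f x\<bar> + \<bar>g (x + z) - g x\<bar> \<partial>lborel)"
    unfolding L1_shift_dist_def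
    by (rule integral_mono) (use f g integrable_lborel_translate[OF f] integrable_lborel_translate[OF g]
        integrable_shift_diff[OF f] integrable_shift_diff[OF g] in auto)
  also have "\<dots> = L1_shift_dist f z + L1_shift_dist g z"
    unfolding L1_shift_dist_def
    using integrable_shift_diff[OF f] integrable_shift_diff[OF g] by (rule Bochner_Integration.integral_add)
  finally show ?thesis .
qed

lemma L1_shift_dist_mult_right: "L1_shift_dist (\<lambda>x. h x * c) z = \<bar>c\<bar> * L1_shift_dist h z"
proof -
  have "\<bar>h (x + z) * c - h x * c\<bar> = \<bar>c\<bar> * \<bar>h (x + z) - h x\<bar>" for x
    by (simp add: abs_mult left_diff_distrib[symmetric])
  then show ?thesis unfolding L1_shift_dist_def by (simp only:) simp
qed

lemma L1_shift_dist_approx_le: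
  fixes h s :: "'a::euclidean_space \<Rightarrow> real"
  assumes h: "integrable lborel h" and s: "integrable lborel s"
  shows "L1_shift_dist h z \<le> L1_shift_dist s z + 2 * (\<integral>x. \<bar>h x - s x\<bar> \<partial>lborel)"
proof -
  have hs: "integrable lborel (\<lambda>x. h x - s x)" using h s by auto
  have "L1_shift_dist (\<lambda>x. (h x - s x) + s x) z \<le> L1_shift_dist (\<lambda>x. h x - s x) z + L1_shift_dist s z"
    by (rule L1_shift_dist_add_le[OF hs s])
  also have "L1_shift_dist (\<lambda>x. h x - s x) z \<le> 2 * (\<integral>x. \<bar>h x - s x\<bar> \<partial>lborel)"
    by (rule L1_shift_dist_le[OF hs])
  finally show ?thesis by simp
qed

lemma tendsto_L1_shift_dist_add:
  fixes f g :: "'a::euclidean_space \<Rightarrow> real"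
  assumes "integrable lborel f" "integrable lborel g"
    and "(L1_shift_dist f \<longlongrightarrow> 0) (at 0)" "(L1_shift_dist g \<longlongrightarrow> 0) (at 0)"
  shows "(L1_shift_dist (\<lambda>x. f x + g x) \<longlongrightarrow> 0) (at 0)"
proof (rule tendsto_sandwich[where f="\<lambda>_. 0" and h="\<lambda>z. L1_shift_dist f z + L1_shift_dist g z"])
  show "((\<lambda>z. L1_shift_dist f z + L1_shift_dist g z) \<longlongrightarrow> 0) (at 0)"
    using tendsto_add[OF assms(3,4)] by simp
qed (auto intro!: always_eventually simp: L1_shift_dist_nonneg L1_shift_dist_add_le[OF assms(1,2)])

lemma tendsto_L1_shift_dist_approx:
  fixes h :: "'a::euclidean_space \<Rightarrow> real"
  assumes h: "integrable lborel h" and s: "\<And>n. integrable lborel (s n)"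
    and s_shift: "\<And>n. (L1_shift_dist (s n) \<longlongrightarrow> 0) (at 0)"
    and s_lim: "(\<lambda>n. \<integral>x. \<bar>h x - s n x\<bar> \<partial>lborel) \<longlonglongrightarrow> 0"
  shows "(L1_shift_dist h \<longlongrightarrow> 0) (at 0)"
proof (rule tendstoI)
  fix e :: real assume e: "e > 0"
  obtain n where n: "\<bar>\<integral>x. \<bar>h x - s n x\<bar> \<partial>lborel\<bar> < e / 4"
    using LIMSEQ_D[OF s_lim, of "e / 4"] e by auto
  have "\<forall>\<^sub>F z in at 0. dist (L1_shift_dist (s n) z) 0 < e / 2"
    using tendstoD[OF s_shift, of "e / 2"] e by simp
  then show "\<forall>\<^sub>F z in at 0. dist (L1_shift_dist h z) 0 < e"
  proof eventually_elim
    case (elim z)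
    then show ?case
      using L1_shift_dist_approx_le[OF h s[of n], of z] L1_shift_dist_nonneg[of h z] L1_shift_dist_nonneg[of "s n" z] n
      by (simp add: dist_real_def)
  qed
qed

lemma tendsto_L1_shift_dist_dominated:
  fixes h :: "'a::euclidean_space \<Rightarrow> real"
  assumes h: "integrable lborel h" and s: "\<And>n. integrable lborel (s n)"
    and s_shift: "\<And>n. (L1_shift_dist (s n) \<longlongrightarrow> 0) (at 0)"
    and s_lim: "\<And>x. (\<lambda>n. s n x) \<longlonglongrightarrow> h x"
    and w: "integrable lborel w" "\<And>n x. \<bar>s n x\<bar> \<le> w x"
  shows "(L1_shift_dist h \<longlongrightarrow> 0) (at 0)"
proof (rule tendsto_L1_shift_dist_approx[OF h s s_shift])
  have "(\<lambda>n. \<integral>x. \<bar>h x - s n x\<bar> \<partial>lborel) \<longlonglongrightarrow> (\<integral>x. 0 \<partial>(lborel :: 'a measure))"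
  proof (rule integral_dominated_convergence[where w="\<lambda>x. \<bar>h x\<bar> + w x"])
    show "AE x in lborel. (\<lambda>n. \<bar>h x - s n x\<bar>) \<longlonglongrightarrow> 0"
    proof (rule AE_I2)
      fix x
      have "(\<lambda>n. h x - s n x) \<longlonglongrightarrow> h x - h x" by (intro tendsto_intros s_lim)
      then show "(\<lambda>n. \<bar>h x - s n x\<bar>) \<longlonglongrightarrow> 0" by (simp add: tendsto_rabs_zero_iff)
    qed
    show "AE x in lborel. norm \<bar>h x - s n x\<bar> \<le> \<bar>h x\<bar> + w x" for n
      using w(2)[of n] by (intro AE_I2) (smt (verit) real_norm_def)
  qed (use h s w in auto)
  then show "(\<lambda>n. \<integral>x. \<bar>h x - s n x\<bar> \<partial>lborel) \<longlonglongrightarrow> 0" by simp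
qed

lemma lborel_compact_open_approx:
  fixes A :: "'a::euclidean_space set"
  assumes A[measurable]: "A \<in> sets borel" and "bounded A" and e: "e > 0"
  obtains K U where "compact K" "open U" "K \<subseteq> A" "A \<subseteq> U"
    "emeasure lborel (U - K) < \<infinity>" "measure lborel (U - K) < e"
proof -
  obtain U where U: "open U" "A \<subseteq> U" "emeasure lborel (U - A) < ennreal (e / 2)"
    using outer_regular_lborel[OF A, of "e / 2"] e by auto
  obtain V where V: "open V" "- A \<subseteq> V" "emeasure lborel (V - - A) < ennreal (e / 2)"
    using outer_regular_lborel[of "- A" "e / 2"] e by auto
  have "compact (- V)"
    using V \<open>bounded A\<close> by (meson bounded_subset closed_Compl compact_eq_bounded_closed compl_le_swap2)
  have [measurable]: "U \<in> sets borel" "V \<in> sets borel" using U V by auto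
  have "emeasure lborel (U - - V) \<le> emeasure lborel ((U - A) \<union> (V - - A))"
    by (rule emeasure_mono) auto
  also have "\<dots> \<le> emeasure lborel (U - A) + emeasure lborel (V - - A)"
    by (rule emeasure_subadditive) auto
  also have "\<dots> < ennreal (e / 2 + e / 2)"
    using U(3) V(3) by (rule add_mono_ennreal)
  also have "e / 2 + e / 2 = e" by simp
  finally have small: "emeasure lborel (U - - V) < ennreal e" .
  then have fin: "emeasure lborel (U - - V) < \<infinity>"
    using ennreal_less_top less_trans by (metis infinity_ennreal_def)
  have "ennreal (measure lborel (U - - V)) < ennreal e"
    using small fin by (simp add: emeasure_eq_ennreal_measure)
  then have "measure lborel (U - - V) < e"
    using e by (simp add: ennreal_less_iff)
  then show ?thesis
    using that[OF \<open>compact (- V)\<close> U(1) _ U(2) fin] V(2) by blast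
qed

lemma tendsto_L1_shift_dist_indicator_bounded:
  fixes A :: "'a::euclidean_space set"
  assumes A[measurable]: "A \<in> sets borel" and "bounded A"
  shows "(L1_shift_dist (indicator A :: 'a \<Rightarrow> real) \<longlongrightarrow> 0) (at 0)"
proof (rule tendstoI)
  fix e :: real assume "e > 0"
  then obtain K U where KU: "compact K" "open U" "K \<subseteq> A" "A \<subseteq> U"
    and fin: "emeasure lborel (U - K) < \<infinity>" and small: "measure lborel (U - K) < e / 2"
    using lborel_compact_open_approx[OF A \<open>bounded A\<close>, of "e / 2"] by auto
  have [measurable]: "K \<in> sets borel" "U \<in> sets borel"
    using KU by (auto intro: borel_closed compact_imp_closed)
  obtain d where "d > 0" and d: "\<And>x y. x \<in> K \<Longrightarrow> y \<notin> U \<Longrightarrow> d \<le> dist x y"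
    using separate_compact_closed[OF KU(1), of "- U"] KU by (metis Compl_iff closed_Compl disjoint_iff subsetD)
  have "L1_shift_dist (indicator A) z < e" if z: "norm z < d" for z :: 'a
  proof -
    \<comment> \<open>a shift by less than \<open>d\<close> cannot move a point of \<open>K\<close> out of \<open>U\<close>\<close>
    have pointwise: "\<bar>indicator A (x + z) - indicator A x\<bar> \<le> (indicator (U - K) x + indicator (U - K) (x + z) :: real)"
      for x
      using d[of x "x + z"] d[of "x + z" x] z KU(3,4)
      by (auto simp: indicator_def dist_norm)
    have iUK: "integrable lborel (indicator (U - K) :: 'a \<Rightarrow> real)"
      using fin by auto
    have iA: "integrable lborel (indicator A :: 'a \<Rightarrow> real)"
      using emeasure_bounded_finite[OF \<open>bounded A\<close>] by auto
    have "L1_shift_dist (indicator A) z \<le> (\<integral>x. indicator (U - K) x + indicator (U - K) (x + z) \<partial>lborel)"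
      unfolding L1_shift_dist_def
      by (rule integral_mono) (use pointwise integrable_shift_diff[OF iA] iUK integrable_lborel_translate[OF iUK] in auto)
    also have "\<dots> = 2 * measure lborel (U - K)"
      using iUK integrable_lborel_translate[OF iUK] integral_lborel_translate[of "indicator (U - K) :: 'a \<Rightarrow> real" z]
      by simp
    finally show ?thesis using small by linarith
  qed
  with \<open>d > 0\<close> show "\<forall>\<^sub>F z in at 0. dist (L1_shift_dist (indicator A) z) 0 < e"
    by (auto simp: eventually_at dist_real_def L1_shift_dist_nonneg intro!: exI[of _ d])
qed

lemma tendsto_L1_shift_dist_indicator:
  fixes A :: "'a::euclidean_space set"
  assumes A[measurable]: "A \<in> sets borel" and fin: "emeasure lborel A < \<infinity>"
  shows "(L1_shift_dist (indicator A :: 'a \<Rightarrow> real) \<longlongrightarrow> 0) (at 0)"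
proof (rule tendsto_L1_shift_dist_dominated)
  let ?s = "\<lambda>n. indicator (A \<inter> cball 0 (real n)) :: 'a \<Rightarrow> real"
  show "integrable lborel (?s n)" for n
    using emeasure_bounded_finite[of "A \<inter> cball 0 (real n)"]
    by (auto simp: bounded_Int intro!: integrable_real_indicator)
  show "(L1_shift_dist (?s n) \<longlongrightarrow> 0) (at 0)" for n
    by (rule tendsto_L1_shift_dist_indicator_bounded) (auto simp: bounded_Int)
  show "(\<lambda>n. ?s n x) \<longlonglongrightarrow> indicator A x" for x
  proof (rule tendsto_eventually)
    obtain N :: nat where N: "norm x \<le> real N" using real_arch_simple by blast
    have "?s n x = indicator A x" if "n \<ge> N" for n
      using N that by (auto simp: indicator_def)
    then show "\<forall>\<^sub>F n in sequentially. ?s n x = indicator A x"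
      by (auto simp: eventually_sequentially)
  qed
  show "\<bar>?s n x\<bar> \<le> indicator A x" for n x
    by (simp add: indicator_def)
qed (use fin in auto)

lemma tendsto_L1_shift_dist:
  fixes h :: "'a::euclidean_space \<Rightarrow> real"
  assumes "integrable lborel h"
  shows "(L1_shift_dist h \<longlongrightarrow> 0) (at 0)"
  using assms
proof (induction rule: integrable_induct)
  case (base A c)
  have "(L1_shift_dist (indicator A :: 'a \<Rightarrow> real) \<longlongrightarrow> 0) (at 0)"
    using base by (intro tendsto_L1_shift_dist_indicator) auto
  then show ?case
    using tendsto_mult_right_zero[of _ _ "\<bar>c\<bar>"] by (simp add: L1_shift_dist_mult_right)
next
  case (add f g)
  then show ?case by (rule tendsto_L1_shift_dist_add)
next
  case (lim f s)
  show ?case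
    by (rule tendsto_L1_shift_dist_dominated[where s=s and w="\<lambda>x. 2 * \<bar>f x\<bar>"])
      (use lim in \<open>auto simp: mult.commute\<close>)
qed

section \<open>The Gaussian kernel\<close>

definition gauss_kernel :: "real \<Rightarrow> 'a::euclidean_space \<Rightarrow> real" where
  "gauss_kernel \<eta> z = exp (- (norm z)\<^sup>2 / (2 * \<eta>))"

lemma borel_measurable_gauss_kernel[measurable]: "gauss_kernel \<eta> \<in> borel_measurable borel"
  unfolding gauss_kernel_def[abs_def] by measurable

lemma gauss_kernel_pos: "0 < gauss_kernel \<eta> z"
  by (simp add: gauss_kernel_def)

lemma gauss_kernel_le_1: "0 < \<eta> \<Longrightarrow> gauss_kernel \<eta> z \<le> 1"
  by (simp add: gauss_kernel_def)

lemma gauss_kernel_minus: "gauss_kernel \<eta> (- z) = gauss_kernel \<eta> z"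
  by (simp add: gauss_kernel_def)

lemma gauss_kernel_scaleR: "c \<noteq> 0 \<Longrightarrow> gauss_kernel \<eta> (c *\<^sub>R z) = gauss_kernel (\<eta> / c\<^sup>2) z"
  by (simp add: gauss_kernel_def power_mult_distrib field_simps)

lemma integrable_gauss_kernel_half: "integrable lborel (gauss_kernel (1 / 2) :: 'a::euclidean_space \<Rightarrow> real)"
proof -
  have "has_bochner_integral lborel (\<lambda>x::real. exp (- x\<^sup>2)) (2 *\<^sub>R (sqrt pi / 2))"
    by (rule has_bochner_integral_even_function[OF gaussian_moment_0]) simp
  then have "integrable lborel (\<lambda>x::real. exp (- x\<^sup>2))"
    by (rule integrable.intros)
  then have gauss_1d: "(\<integral>\<^sup>+x. ennreal (exp (- x\<^sup>2)) \<partial>(lborel :: real measure)) < \<infinity>"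
    by (simp add: integrable_iff_bounded)
  have "gauss_kernel (1 / 2) z = (\<Prod>b\<in>Basis. exp (- (z \<bullet> b)\<^sup>2))" for z :: 'a
  proof -
    have "(norm z)\<^sup>2 = (\<Sum>b\<in>Basis. (z \<bullet> b)\<^sup>2)"
      unfolding power2_norm_eq_inner euclidean_inner[of z z] by (simp add: power2_eq_square)
    then show ?thesis
      by (simp add: gauss_kernel_def exp_sum sum_negf[symmetric])
  qed
  then have "(\<integral>\<^sup>+z. ennreal (gauss_kernel (1 / 2) z) \<partial>(lborel :: 'a measure))
      = (\<integral>\<^sup>+z. (\<Prod>b\<in>Basis. ennreal (exp (- (z \<bullet> b)\<^sup>2))) \<partial>(lborel :: 'a measure))"
    by (simp add: prod_ennreal)
  also have "\<dots> = (\<Prod>b\<in>(Basis :: 'a set). \<integral>\<^sup>+x. ennreal (exp (- x\<^sup>2)) \<partial>lborel)"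
    by (rule nn_integral_lborel_prod) auto
  also have "\<dots> < \<infinity>"
    using gauss_1d by (simp add: power_less_top_ennreal)
  finally show ?thesis
    by (simp add: integrable_iff_bounded abs_of_pos[OF gauss_kernel_pos])
qed

lemma nn_integral_gauss_kernel_scale:
  assumes "c > 0"
  shows "(\<integral>\<^sup>+z. gauss_kernel \<eta> z \<partial>(lborel :: 'a::euclidean_space measure))
    = ennreal (c ^ DIM('a)) * (\<integral>\<^sup>+z. gauss_kernel (\<eta> / c\<^sup>2) (z :: 'a) \<partial>lborel)"
  using nn_integral_lborel_scaleR[of "\<lambda>z. ennreal (gauss_kernel \<eta> z)" c] assms
  by (simp add: gauss_kernel_scaleR)

lemma integrable_gauss_kernel:
  assumes "\<eta> > 0"
  shows "integrable lborel (gauss_kernel \<eta> :: 'a::euclidean_space \<Rightarrow> real)"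
proof -
  have "(\<integral>\<^sup>+z. gauss_kernel \<eta> z \<partial>(lborel :: 'a measure))
      = ennreal (sqrt (2 * \<eta>) ^ DIM('a)) * (\<integral>\<^sup>+z. gauss_kernel (1 / 2) (z :: 'a) \<partial>lborel)"
    using nn_integral_gauss_kernel_scale[of "sqrt (2 * \<eta>)" \<eta>] assms by simp
  also have "\<dots> < \<infinity>"
    using integrable_gauss_kernel_half[where 'a='a]
    by (simp add: integrable_iff_bounded abs_of_pos[OF gauss_kernel_pos] ennreal_mult_less_top)
  finally show ?thesis
    by (simp add: integrable_iff_bounded abs_of_pos[OF gauss_kernel_pos])
qed

lemma integral_gauss_kernel_pos: "\<eta> > 0 \<Longrightarrow> 0 < (\<integral>z. gauss_kernel \<eta> (z :: 'a::euclidean_space) \<partial>lborel)"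
  using integral_lborel_pos[OF integrable_gauss_kernel gauss_kernel_pos] .

lemma integral_gauss_kernel_double:
  assumes "\<eta> > 0"
  shows "(\<integral>z. gauss_kernel (2 * \<eta>) (z :: 'a::euclidean_space) \<partial>lborel)
    = sqrt 2 ^ DIM('a) * (\<integral>z. gauss_kernel \<eta> (z :: 'a) \<partial>lborel)"
proof -
  have "ennreal (\<integral>z. gauss_kernel (2 * \<eta>) (z :: 'a) \<partial>lborel)
      = ennreal (sqrt 2 ^ DIM('a)) * (\<integral>\<^sup>+z. gauss_kernel \<eta> (z :: 'a) \<partial>lborel)"
    using nn_integral_gauss_kernel_scale[of "sqrt 2" "2 * \<eta>", where 'a='a] assms
    by (simp add: nn_integral_eq_integral[symmetric] integrable_gauss_kernel less_imp_le[OF gauss_kernel_pos])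
  also have "\<dots> = ennreal (sqrt 2 ^ DIM('a) * (\<integral>z. gauss_kernel \<eta> (z :: 'a) \<partial>lborel))"
    using assms
    by (simp add: nn_integral_eq_integral integrable_gauss_kernel less_imp_le[OF gauss_kernel_pos]
        ennreal_mult integral_nonneg_AE)
  finally show ?thesis
    using assms by (simp add: integral_nonneg_AE less_imp_le[OF gauss_kernel_pos])
qed

definition gauss_density :: "real \<Rightarrow> 'a::euclidean_space \<Rightarrow> real" where
  "gauss_density \<eta> z = gauss_kernel \<eta> z / (\<integral>w. gauss_kernel \<eta> (w :: 'a) \<partial>lborel)"

lemma borel_measurable_gauss_density[measurable]: "gauss_density \<eta> \<in> borel_measurable borel"
  unfolding gauss_density_def[abs_def] by measurable

lemma gauss_density_nonneg: "0 \<le> gauss_density \<eta> z"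
  unfolding gauss_density_def
  by (intro divide_nonneg_nonneg integral_nonneg_AE) (auto intro: less_imp_le gauss_kernel_pos)

lemma gauss_density_minus: "gauss_density \<eta> (- z) = gauss_density \<eta> z"
  by (simp add: gauss_density_def gauss_kernel_minus)

lemma integrable_gauss_density: "\<eta> > 0 \<Longrightarrow> integrable lborel (gauss_density \<eta> :: 'a::euclidean_space \<Rightarrow> real)"
  unfolding gauss_density_def[abs_def] by (intro integrable_divide_zero integrable_gauss_kernel)

lemma integral_gauss_density: "\<eta> > 0 \<Longrightarrow> (\<integral>z. gauss_density \<eta> (z :: 'a::euclidean_space) \<partial>lborel) = 1"
  using integral_gauss_kernel_pos[of \<eta>, where 'a='a] by (simp add: gauss_density_def)

lemma bounded_range_gauss_density:
  assumes "\<eta> > 0"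
  shows "bounded (range (gauss_density \<eta> :: 'a::euclidean_space \<Rightarrow> real))"
proof -
  define c where "c = (\<integral>w. gauss_kernel \<eta> (w :: 'a) \<partial>lborel)"
  have "c > 0" unfolding c_def using assms by (rule integral_gauss_kernel_pos)
  have "\<bar>gauss_density \<eta> z\<bar> \<le> 1 / c" for z :: 'a
    using gauss_kernel_le_1[OF assms, of z] gauss_kernel_pos[of \<eta> z] \<open>c > 0\<close>
    by (simp add: gauss_density_def c_def[symmetric] divide_right_mono)
  then show ?thesis by (auto simp: bounded_iff)
qed

lemma gauss_density_tail_le:
  assumes "\<eta> > 0" "\<delta> \<ge> 0"
  shows "(\<integral>z. indicator {z. \<delta> \<le> norm z} z * gauss_density \<eta> (z :: 'a::euclidean_space) \<partial>lborel)
    \<le> sqrt 2 ^ DIM('a) * exp (- \<delta>\<^sup>2 / (4 * \<eta>))"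
proof -
  define c where "c = (\<integral>z. gauss_kernel \<eta> (z :: 'a) \<partial>lborel)"
  have c: "c > 0" unfolding c_def using assms(1) by (rule integral_gauss_kernel_pos)
  \<comment> \<open>on \<open>norm z \<ge> \<delta>\<close>, half of the exponent of \<open>gauss_kernel \<eta> z\<close> is at most \<open>- \<delta>\<^sup>2 / (4 * \<eta>)\<close>\<close>
  have tail: "indicator {z. \<delta> \<le> norm z} z * gauss_kernel \<eta> z
      \<le> exp (- \<delta>\<^sup>2 / (4 * \<eta>)) * gauss_kernel (2 * \<eta>) z" for z :: 'a
  proof (cases "\<delta> \<le> norm z")
    case True
    then have "\<delta>\<^sup>2 \<le> (norm z)\<^sup>2" using assms by (intro power_mono) auto
    then have "- (norm z)\<^sup>2 / (2 * \<eta>) \<le> - \<delta>\<^sup>2 / (4 * \<eta>) + - (norm z)\<^sup>2 / (2 * (2 * \<eta>))"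
      using assms by (simp add: field_simps)
    then show ?thesis
      using True by (simp add: gauss_kernel_def exp_add[symmetric])
  qed (simp add: less_imp_le[OF gauss_kernel_pos])
  have "(\<integral>z. indicator {z. \<delta> \<le> norm z} z * gauss_kernel \<eta> (z :: 'a) \<partial>lborel)
      \<le> (\<integral>z. exp (- \<delta>\<^sup>2 / (4 * \<eta>)) * gauss_kernel (2 * \<eta>) (z :: 'a) \<partial>lborel)"
  proof (rule integral_mono[OF _ _ tail])
    show "integrable lborel (\<lambda>z::'a. indicator {z. \<delta> \<le> norm z} z * gauss_kernel \<eta> z)"
      by (rule Bochner_Integration.integrable_bound[OF integrable_gauss_kernel[OF assms(1)]])
        (auto simp: indicator_def abs_of_pos[OF gauss_kernel_pos] less_imp_le[OF gauss_kernel_pos])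
  qed (use integrable_gauss_kernel[of "2 * \<eta>"] assms in auto)
  also have "\<dots> = exp (- \<delta>\<^sup>2 / (4 * \<eta>)) * (sqrt 2 ^ DIM('a) * c)"
    using integral_gauss_kernel_double[OF assms(1), where 'a='a] by (simp add: c_def)
  finally show ?thesis
    using c by (simp add: gauss_density_def c_def[symmetric] field_simps)
qed

lemma tendsto_gauss_density_tail:
  assumes "\<delta> > 0"
  shows "((\<lambda>\<eta>. \<integral>z. indicator {z. \<delta> \<le> norm z} z * gauss_density \<eta> (z :: 'a::euclidean_space) \<partial>lborel)
    \<longlongrightarrow> 0) (at_right 0)"
proof (rule tendsto_sandwich[where f="\<lambda>_. 0"])
  have exp_tendsto: "((\<lambda>\<eta>. exp (- (\<delta>\<^sup>2 / 4) * inverse \<eta>)) \<longlongrightarrow> 0) (at_right 0)"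
    by (rule filterlim_compose[OF exp_at_bot filterlim_tendsto_neg_mult_at_bot[OF tendsto_const]])
      (use assms filterlim_inverse_at_top_right in auto)
  show "((\<lambda>\<eta>. sqrt 2 ^ DIM('a) * exp (- \<delta>\<^sup>2 / (4 * \<eta>))) \<longlongrightarrow> 0) (at_right 0)"
    using tendsto_mult_left_zero[OF exp_tendsto, of "sqrt 2 ^ DIM('a)"] by (simp add: field_simps)
  show "\<forall>\<^sub>F \<eta> in at_right 0. 0 \<le> (\<integral>z. indicator {z. \<delta> \<le> norm z} z * gauss_density \<eta> (z :: 'a) \<partial>lborel)"
    by (intro always_eventually allI integral_nonneg_AE) (simp add: gauss_density_nonneg)
  show "\<forall>\<^sub>F \<eta> in at_right 0. (\<integral>z. indicator {z. \<delta> \<le> norm z} z * gauss_density \<eta> (z :: 'a) \<partial>lborel)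
      \<le> sqrt 2 ^ DIM('a) * exp (- \<delta>\<^sup>2 / (4 * \<eta>))"
    using eventually_at_right_less[of 0] by eventually_elim (use assms gauss_density_tail_le[where 'a='a] in auto)
qed simp

section \<open>Gaussian smoothing in \<open>L\<^sub>1\<close>\<close>

lemma conv_sub_le_nn_integral:
  fixes h k :: "'a::euclidean_space \<Rightarrow> real"
  assumes h: "integrable lborel h"
    and k: "integrable lborel k" "bounded (range k)" "\<And>z. k (- z) = k z" "(\<integral>z. k z \<partial>lborel) = 1"
  shows "ennreal \<bar>(\<integral>y. h y * k (x - y) \<partial>lborel) - h x\<bar>
    \<le> (\<integral>\<^sup>+z. ennreal \<bar>k z * (h (x + z) - h x)\<bar> \<partial>lborel)"
proof -
  have [measurable]: "h \<in> borel_measurable borel" "k \<in> borel_measurable borel" using h k by auto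
  obtain B where B: "\<And>z. \<bar>k z\<bar> \<le> B"
    using k(2) by (auto simp: bounded_iff)
  have "(\<integral>y. h y * k (x - y) \<partial>lborel) = (\<integral>z. h (z + x) * k (x - (z + x)) \<partial>lborel)"
    by (rule integral_lborel_translate[symmetric]) measurable
  also have "\<dots> = (\<integral>z. k z * h (x + z) \<partial>lborel)"
    using k(3) by (simp add: add.commute mult.commute)
  finally have conv: "(\<integral>y. h y * k (x - y) \<partial>lborel) = (\<integral>z. k z * h (x + z) \<partial>lborel)" .
  have "integrable lborel (\<lambda>z. k z * h (x + z))"
  proof (rule Bochner_Integration.integrable_bound[where f="\<lambda>z. B * h (x + z)"])
    show "integrable lborel (\<lambda>z. B * h (x + z))"
      using integrable_lborel_translate[OF h, of x] by (simp add: add.commute)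
    show "AE z in lborel. norm (k z * h (x + z)) \<le> norm (B * h (x + z))"
    proof (intro AE_I2)
      fix z
      have "\<bar>k z\<bar> \<le> \<bar>B\<bar>" using B[of z] by linarith
      then show "norm (k z * h (x + z)) \<le> norm (B * h (x + z))"
        by (simp add: abs_mult mult_right_mono)
    qed
  qed measurable
  then have "(\<integral>y. h y * k (x - y) \<partial>lborel) - h x = (\<integral>z. k z * (h (x + z) - h x) \<partial>lborel)"
    using k(1,4) by (simp add: conv right_diff_distrib)
  moreover have "integrable lborel (\<lambda>z. k z * (h (x + z) - h x))"
    using \<open>integrable lborel (\<lambda>z. k z * h (x + z))\<close> k(1) by (simp add: right_diff_distrib)
  ultimately show ?thesis
    using integral_norm_bound_ennreal[of lborel "\<lambda>z. k z * (h (x + z) - h x)"] by simp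
qed

lemma nn_integral_conv_sub_le:
  fixes h k :: "'a::euclidean_space \<Rightarrow> real"
  assumes h: "integrable lborel h"
    and k: "integrable lborel k" "bounded (range k)" "\<And>z. k (- z) = k z" "(\<integral>z. k z \<partial>lborel) = 1"
      "\<And>z. 0 \<le> k z"
    and e: "0 \<le> e" and near: "\<And>z. norm z < \<delta> \<Longrightarrow> L1_shift_dist h z \<le> e"
  shows "(\<integral>\<^sup>+x. ennreal \<bar>(\<integral>y. h y * k (x - y) \<partial>lborel) - h x\<bar> \<partial>lborel)
    \<le> ennreal (e + 2 * (\<integral>x. \<bar>h x\<bar> \<partial>lborel) * (\<integral>z. indicator {z. \<delta> \<le> norm z} z * k z \<partial>lborel))"
proof -
  have [measurable]: "h \<in> borel_measurable borel" "k \<in> borel_measurable borel" using h k by auto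
  define N where "N = (\<integral>x. \<bar>h x\<bar> \<partial>lborel)"
  have N: "0 \<le> N" unfolding N_def by (rule integral_nonneg_AE) simp
  have shift_le: "L1_shift_dist h z \<le> e + 2 * N * indicator {z. \<delta> \<le> norm z} z" for z
    using near[of z] L1_shift_dist_le[OF h, of z] e by (cases "norm z < \<delta>") (auto simp: N_def)
  have tail_integrable: "integrable lborel (\<lambda>z. indicator {z. \<delta> \<le> norm z} z * k z)"
    by (rule Bochner_Integration.integrable_bound[OF k(1)]) (auto simp: indicator_def k(5))
  have "(\<integral>\<^sup>+x. ennreal \<bar>(\<integral>y. h y * k (x - y) \<partial>lborel) - h x\<bar> \<partial>lborel)
      \<le> (\<integral>\<^sup>+x. \<integral>\<^sup>+z. ennreal (k z * \<bar>h (x + z) - h x\<bar>) \<partial>lborel \<partial>lborel)"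
    using conv_sub_le_nn_integral[OF h k(1-4)] k(5) by (intro nn_integral_mono) (simp add: abs_mult)
  also have "\<dots> = (\<integral>\<^sup>+z. \<integral>\<^sup>+x. ennreal (k z * \<bar>h (x + z) - h x\<bar>) \<partial>lborel \<partial>lborel)"
    by (rule lborel_pair.Fubini') measurable
  also have "\<dots> = (\<integral>\<^sup>+z. ennreal (k z * L1_shift_dist h z) \<partial>lborel)"
  proof (rule nn_integral_cong)
    fix z
    have "(\<integral>\<^sup>+x. ennreal (k z * \<bar>h (x + z) - h x\<bar>) \<partial>lborel) = ennreal (\<integral>x. k z * \<bar>h (x + z) - h x\<bar> \<partial>lborel)"
      by (rule nn_integral_eq_integral) (use integrable_shift_diff[OF h] k(5) in auto)
    then show "(\<integral>\<^sup>+x. ennreal (k z * \<bar>h (x + z) - h x\<bar>) \<partial>lborel) = ennreal (k z * L1_shift_dist h z)"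
      by (simp add: L1_shift_dist_def)
  qed
  also have "\<dots> \<le> (\<integral>\<^sup>+z. ennreal (e * k z + 2 * N * (indicator {z. \<delta> \<le> norm z} z * k z)) \<partial>lborel)"
  proof (intro nn_integral_mono ennreal_leI)
    fix z
    have "k z * L1_shift_dist h z \<le> k z * (e + 2 * N * indicator {z. \<delta> \<le> norm z} z)"
      using shift_le k(5) by (rule mult_left_mono)
    then show "k z * L1_shift_dist h z \<le> e * k z + 2 * N * (indicator {z. \<delta> \<le> norm z} z * k z)"
      by (simp add: algebra_simps)
  qed
  also have "\<dots> = ennreal (\<integral>z. e * k z + 2 * N * (indicator {z. \<delta> \<le> norm z} z * k z) \<partial>lborel)"
    using k(1) tail_integrable e N k(5) by (intro nn_integral_eq_integral) auto
  also have "(\<integral>z. e * k z + 2 * N * (indicator {z. \<delta> \<le> norm z} z * k z) \<partial>lborel)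
      = e + 2 * N * (\<integral>z. indicator {z. \<delta> \<le> norm z} z * k z \<partial>lborel)"
    using k(1,4) tail_integrable by simp
  finally show ?thesis unfolding N_def .
qed

definition gauss_conv :: "real \<Rightarrow> ('a::euclidean_space \<Rightarrow> real) \<Rightarrow> 'a \<Rightarrow> real" where
  "gauss_conv \<eta> h x = (\<integral>y. h y * gauss_density \<eta> (x - y) \<partial>lborel)"

lemma borel_measurable_gauss_conv[measurable]:
  assumes [measurable]: "h \<in> borel_measurable borel"
  shows "gauss_conv \<eta> h \<in> borel_measurable lborel"
  unfolding gauss_conv_def[abs_def]
  by (rule lborel.borel_measurable_lebesgue_integral) measurable

lemma nn_integral_gauss_conv_sub_le:
  fixes h :: "'a::euclidean_space \<Rightarrow> real"
  assumes "integrable lborel h" "\<eta> > 0" "0 \<le> e" "\<And>z. norm z < \<delta> \<Longrightarrow> L1_shift_dist h z \<le> e"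
  shows "(\<integral>\<^sup>+x. ennreal \<bar>gauss_conv \<eta> h x - h x\<bar> \<partial>lborel)
    \<le> ennreal (e + 2 * (\<integral>x. \<bar>h x\<bar> \<partial>lborel) * (\<integral>z. indicator {z. \<delta> \<le> norm z} z * gauss_density \<eta> (z :: 'a) \<partial>lborel))"
  unfolding gauss_conv_def
  using assms
  by (intro nn_integral_conv_sub_le) (auto simp: integrable_gauss_density bounded_range_gauss_density
      gauss_density_minus integral_gauss_density gauss_density_nonneg)

lemma integrable_gauss_conv_sub:
  fixes h :: "'a::euclidean_space \<Rightarrow> real"
  assumes h: "integrable lborel h" and "\<eta> > 0"
  shows "integrable lborel (\<lambda>x. gauss_conv \<eta> h x - h x)"
proof -
  have [measurable]: "h \<in> borel_measurable borel" using h by auto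
  define N where "N = (\<integral>x. \<bar>h x\<bar> \<partial>lborel)"
  have "0 \<le> N" unfolding N_def by (rule integral_nonneg_AE) simp
  have "(\<integral>\<^sup>+x. ennreal \<bar>gauss_conv \<eta> h x - h x\<bar> \<partial>lborel)
      \<le> ennreal (2 * N + 2 * N * (\<integral>z. indicator {z. 0 \<le> norm z} z * gauss_density \<eta> (z :: 'a) \<partial>lborel))"
    unfolding N_def
    by (rule nn_integral_gauss_conv_sub_le[OF h \<open>\<eta> > 0\<close>]) (use \<open>0 \<le> N\<close> in \<open>simp_all add: N_def\<close>)
  also have "\<dots> < \<infinity>" by simp
  finally show ?thesis
    by (simp add: integrable_iff_bounded)
qed

lemma integrable_gauss_conv:
  assumes "integrable lborel h" "\<eta> > 0"
  shows "integrable lborel (gauss_conv \<eta> h)"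
proof -
  have "integrable lborel (\<lambda>x. (gauss_conv \<eta> h x - h x) + h x)"
    using integrable_gauss_conv_sub[OF assms] assms(1) by (rule Bochner_Integration.integrable_add)
  then show ?thesis by simp
qed

lemma tendsto_L1_gauss_conv:
  fixes h :: "'a::euclidean_space \<Rightarrow> real"
  assumes h: "integrable lborel h"
  shows "((\<lambda>\<eta>. \<integral>x. \<bar>gauss_conv \<eta> h x - h x\<bar> \<partial>lborel) \<longlongrightarrow> 0) (at_right 0)"
proof (rule tendstoI)
  fix e :: real assume "e > 0"
  define N where "N = (\<integral>x. \<bar>h x\<bar> \<partial>lborel)"
  have N: "0 \<le> N" unfolding N_def by (rule integral_nonneg_AE) simp
  obtain \<delta> where "\<delta> > 0" and \<delta>: "\<And>z. norm z < \<delta> \<Longrightarrow> L1_shift_dist h z \<le> e / 2"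
  proof -
    have "\<forall>\<^sub>F z in at 0. dist (L1_shift_dist h z) 0 < e / 2"
      using tendstoD[OF tendsto_L1_shift_dist[OF h], of "e / 2"] \<open>e > 0\<close> by simp
    then obtain \<delta> where "\<delta> > 0" "\<And>z. z \<noteq> 0 \<Longrightarrow> norm z < \<delta> \<Longrightarrow> L1_shift_dist h z < e / 2"
      by (auto simp: eventually_at dist_real_def abs_of_nonneg[OF L1_shift_dist_nonneg])
    moreover have "L1_shift_dist h 0 = 0" by (simp add: L1_shift_dist_def)
    ultimately show ?thesis
      using that \<open>e > 0\<close> by (metis less_eq_real_def half_gt_zero)
  qed
  have "\<forall>\<^sub>F \<eta> in at_right 0.
      dist (\<integral>z. indicator {z. \<delta> \<le> norm z} z * gauss_density \<eta> (z :: 'a) \<partial>lborel) 0 < e / (4 * (N + 1))"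
    using tendstoD[OF tendsto_gauss_density_tail[OF \<open>\<delta> > 0\<close>, where 'a='a], of "e / (4 * (N + 1))"] \<open>e > 0\<close> N
    by simp
  with eventually_at_right_less[of 0]
  show "\<forall>\<^sub>F \<eta> in at_right 0. dist (\<integral>x. \<bar>gauss_conv \<eta> h x - h x\<bar> \<partial>lborel) 0 < e"
  proof eventually_elim
    case (elim \<eta>)
    define tail where "tail = (\<integral>z. indicator {z. \<delta> \<le> norm z} z * gauss_density \<eta> (z :: 'a) \<partial>lborel)"
    have "0 \<le> tail" unfolding tail_def by (intro integral_nonneg_AE) (simp add: gauss_density_nonneg)
    have "ennreal (\<integral>x. \<bar>gauss_conv \<eta> h x - h x\<bar> \<partial>lborel) \<le> ennreal (e / 2 + 2 * N * tail)"
      using nn_integral_gauss_conv_sub_le[OF h _ _ \<delta>] elim \<open>e > 0\<close>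
      by (simp add: nn_integral_eq_integral[symmetric] integrable_gauss_conv_sub[OF h] N_def tail_def)
    then have "(\<integral>x. \<bar>gauss_conv \<eta> h x - h x\<bar> \<partial>lborel) \<le> e / 2 + 2 * N * tail"
      using \<open>0 \<le> tail\<close> N \<open>e > 0\<close> by (simp add: ennreal_le_iff del: ennreal_plus)
    also have "2 * N * tail \<le> 2 * N * (e / (4 * (N + 1)))"
      using elim \<open>0 \<le> tail\<close> N by (intro mult_left_mono) (auto simp: tail_def)
    also have "\<dots> < e / 2"
      using N \<open>e > 0\<close> by (simp add: field_simps)
    finally show ?case
      by (simp add: dist_real_def integral_nonneg_AE)
  qed
qed

section \<open>Total variation of the normalised densities\<close>

lemma TV_normalized_le:
  fixes P Q :: "'a::euclidean_space \<Rightarrow> real"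
  assumes P: "integrable lborel P" "\<And>x. 0 \<le> P x" and Q: "integrable lborel Q"
    and Zq: "0 < (\<integral>x. Q x \<partial>lborel)"
  shows "TV (\<lambda>x. P x / (\<integral>x. P x \<partial>lborel)) (\<lambda>x. Q x / (\<integral>x. Q x \<partial>lborel))
    \<le> (\<integral>x. \<bar>P x - Q x\<bar> \<partial>lborel) / (\<integral>x. Q x \<partial>lborel)"
proof -
  define Zp Zq L where "Zp = (\<integral>x. P x \<partial>lborel)" and "Zq = (\<integral>x. Q x \<partial>lborel)"
    and "L = (\<integral>x. \<bar>P x - Q x\<bar> \<partial>lborel)"
  have "0 < Zq" "0 \<le> Zp" using Zq P by (auto simp: Zp_def Zq_def integral_nonneg_AE)
  have "\<bar>Zp - Zq\<bar> \<le> L"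
    unfolding Zp_def Zq_def L_def using P Q by (simp flip: Bochner_Integration.integral_diff)
  \<comment> \<open>valid also for \<open>Zp = 0\<close>, where \<open>P x / Zp = 0\<close>\<close>
  have mass: "Zp * \<bar>1 / Zp - 1 / Zq\<bar> \<le> \<bar>Zq - Zp\<bar> / Zq"
  proof (cases "Zp = 0")
    case False
    have "Zp * \<bar>1 / Zp - 1 / Zq\<bar> = \<bar>Zp * (1 / Zp - 1 / Zq)\<bar>"
      using \<open>0 \<le> Zp\<close> by (simp add: abs_mult)
    also have "Zp * (1 / Zp - 1 / Zq) = (Zq - Zp) / Zq"
      using False \<open>0 < Zq\<close> by (simp add: field_simps)
    finally show ?thesis using \<open>0 < Zq\<close> by simp
  qed (use \<open>0 < Zq\<close> in simp)
  have "(\<integral>x. \<bar>P x / Zp - Q x / Zq\<bar> \<partial>lborel)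
      \<le> (\<integral>x. \<bar>P x - Q x\<bar> / Zq + P x * \<bar>1 / Zp - 1 / Zq\<bar> \<partial>lborel)"
  proof (rule integral_mono)
    show "\<bar>P x / Zp - Q x / Zq\<bar> \<le> \<bar>P x - Q x\<bar> / Zq + P x * \<bar>1 / Zp - 1 / Zq\<bar>" for x
    proof -
      have "P x / Zp - Q x / Zq = (P x - Q x) / Zq + P x * (1 / Zp - 1 / Zq)"
        by (simp add: right_diff_distrib diff_divide_distrib)
      then show ?thesis
        using abs_triangle_ineq[of "(P x - Q x) / Zq" "P x * (1 / Zp - 1 / Zq)"] \<open>0 < Zq\<close> P(2)[of x]
        by (simp add: abs_mult)
    qed
  qed (use P Q in auto)
  also have "\<dots> = L / Zq + Zp * \<bar>1 / Zp - 1 / Zq\<bar>"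
    using P Q by (simp add: L_def Zp_def)
  also have "\<dots> \<le> L / Zq + L / Zq"
    using mass divide_right_mono[OF \<open>\<bar>Zp - Zq\<bar> \<le> L\<close>, of Zq] \<open>0 < Zq\<close>
    by (simp add: abs_minus_commute)
  finally have "(\<integral>x. \<bar>P x / Zp - Q x / Zq\<bar> \<partial>lborel) \<le> 2 * (L / Zq)"
    by simp
  then show ?thesis
    unfolding TV_def Zp_def[symmetric] Zq_def[symmetric] L_def[symmetric] by linarith
qed

lemma TV_nonneg: "0 \<le> TV \<mu> \<nu>"
  unfolding TV_def by (simp add: integral_nonneg_AE)

lemma piX_eq_gauss_conv:
  fixes f g :: "'a::euclidean_space \<Rightarrow> real"
  assumes "\<eta> > 0"
  shows "piX f g \<eta> = (\<lambda>x. exp (- f x) * gauss_conv \<eta> (\<lambda>y. exp (- g y)) x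
    / (\<integral>z. exp (- f z) * gauss_conv \<eta> (\<lambda>y. exp (- g y)) z \<partial>lborel))"
proof -
  define c where "c = (\<integral>w. gauss_kernel \<eta> (w :: 'a) \<partial>lborel)"
  have "c > 0" unfolding c_def using assms by (rule integral_gauss_kernel_pos)
  have unnorm: "piX_unnorm f g \<eta> x = c * (exp (- f x) * gauss_conv \<eta> (\<lambda>y. exp (- g y)) x)" for x
  proof -
    have "exp (- f x - g y - (norm (x - y))\<^sup>2 / (2 * \<eta>))
        = c * exp (- f x) * (exp (- g y) * gauss_density \<eta> (x - y))" for y
    proof -
      have "exp (- f x - g y - (norm (x - y))\<^sup>2 / (2 * \<eta>)) = exp (- f x) * exp (- g y) * gauss_kernel \<eta> (x - y)"
        by (simp add: gauss_kernel_def exp_add[symmetric])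
      also have "gauss_kernel \<eta> (x - y) = c * gauss_density \<eta> (x - y)"
        using \<open>c > 0\<close> by (simp add: gauss_density_def c_def)
      finally show ?thesis by (simp only: ac_simps)
    qed
    then show ?thesis
      by (simp add: piX_unnorm_def gauss_conv_def)
  qed
  show ?thesis
    using \<open>c > 0\<close> by (simp add: fun_eq_iff piX_def unnorm)
qed

lemma TV_piX_nu_dens_le:
  fixes f g :: "'a::euclidean_space \<Rightarrow> real"
  assumes [measurable]: "f \<in> borel_measurable borel"
    and h: "integrable lborel (\<lambda>x. exp (- g x))"
    and C: "AE x in lborel. exp (- f x) \<le> C"
    and Z: "(\<integral>x. exp (- f x - g x) \<partial>lborel) > 0"
    and "\<eta> > 0"
  shows "TV (piX f g \<eta>) (nu_dens f g)
    \<le> C * (\<integral>x. \<bar>gauss_conv \<eta> (\<lambda>y. exp (- g y)) x - exp (- g x)\<bar> \<partial>lborel)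
      / (\<integral>x. exp (- f x - g x) \<partial>lborel)"
proof -
  define u where "u = gauss_conv \<eta> (\<lambda>y. exp (- g y))"
  define P Q where "P x = exp (- f x) * u x" and "Q x = exp (- f x) * exp (- g x)" for x
  have [measurable]: "(\<lambda>x. exp (- g x)) \<in> borel_measurable borel" using h by auto
  have u: "integrable lborel u" "\<And>x. 0 \<le> u x"
    using integrable_gauss_conv[OF h \<open>\<eta> > 0\<close>] unfolding u_def gauss_conv_def
    by (auto intro!: integral_nonneg_AE simp: gauss_density_nonneg)
  have bound: "AE x in lborel. norm (exp (- f x) * v x) \<le> norm (C * v x)" for v :: "'a \<Rightarrow> real"
    using C by eventually_elim (simp add: abs_mult mult_right_mono)
  have P: "integrable lborel P"
    unfolding P_def
    by (rule Bochner_Integration.integrable_bound[OF integrable_mult_right[OF u(1)] _ bound]) (simp add: u_def)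
  have Q: "integrable lborel Q"
    unfolding Q_def
    by (rule Bochner_Integration.integrable_bound[OF integrable_mult_right[OF h] _ bound]) simp
  have "(\<integral>x. \<bar>P x - Q x\<bar> \<partial>lborel) \<le> (\<integral>x. C * \<bar>u x - exp (- g x)\<bar> \<partial>lborel)"
  proof (rule integral_mono_AE)
    show "AE x in lborel. \<bar>P x - Q x\<bar> \<le> C * \<bar>u x - exp (- g x)\<bar>"
      using C by eventually_elim (simp add: P_def Q_def abs_mult mult_right_mono flip: right_diff_distrib)
  qed (use P Q integrable_gauss_conv_sub[OF h \<open>\<eta> > 0\<close>] in \<open>auto simp: u_def\<close>)
  also have "\<dots> = C * (\<integral>x. \<bar>u x - exp (- g x)\<bar> \<partial>lborel)"
    by simp
  finally have L1: "(\<integral>x. \<bar>P x - Q x\<bar> \<partial>lborel) \<le> C * (\<integral>x. \<bar>u x - exp (- g x)\<bar> \<partial>lborel)" .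
  have ZQ: "(\<integral>x. Q x \<partial>lborel) = (\<integral>x. exp (- f x - g x) \<partial>lborel)"
    by (simp add: Q_def exp_add[symmetric])
  have "piX f g \<eta> = (\<lambda>x. P x / (\<integral>x. P x \<partial>lborel))"
    using piX_eq_gauss_conv[OF \<open>\<eta> > 0\<close>] by (simp add: P_def u_def)
  moreover have "nu_dens f g = (\<lambda>x. Q x / (\<integral>x. Q x \<partial>lborel))"
    by (simp add: nu_dens_def Q_def exp_add[symmetric] fun_eq_iff)
  ultimately have "TV (piX f g \<eta>) (nu_dens f g) \<le> (\<integral>x. \<bar>P x - Q x\<bar> \<partial>lborel) / (\<integral>x. Q x \<partial>lborel)"
    using TV_normalized_le[OF P _ Q] u(2) Z ZQ by (simp add: P_def)
  also have "\<dots> \<le> C * (\<integral>x. \<bar>u x - exp (- g x)\<bar> \<partial>lborel) / (\<integral>x. exp (- f x - g x) \<partial>lborel)"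
    unfolding ZQ using L1 Z by (simp add: divide_right_mono)
  finally show ?thesis unfolding u_def .
qed

\<comment> \<open>measurability of \<open>g\<close> is implied by the integrability of \<open>exp (- g)\<close>\<close>
theorem mainTheorem9:
  fixes f g :: "'a::euclidean_space \<Rightarrow> real"
  assumes "f \<in> borel_measurable lborel"
      and "g \<in> borel_measurable lborel"
      and "integrable lborel (\<lambda>x. exp (- g x))"
      and "\<exists>C. AE x in lborel. exp (- f x) \<le> C"
      and "(\<integral>x. exp (- f x - g x) \<partial>lborel) > 0"
  shows "((\<lambda>\<eta>. TV (piX f g \<eta>) (nu_dens f g)) \<longlongrightarrow> 0) (at_right 0)"
proof -
  obtain C where C: "AE x in lborel. exp (- f x) \<le> C" using assms(4) by blast
  define Z where "Z = (\<integral>x. exp (- f x - g x) \<partial>lborel)"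
  let ?L1 = "\<lambda>\<eta>. \<integral>x. \<bar>gauss_conv \<eta> (\<lambda>y. exp (- g y)) x - exp (- g x)\<bar> \<partial>lborel"
  have lim: "((\<lambda>\<eta>. C * ?L1 \<eta> / Z) \<longlongrightarrow> 0) (at_right 0)"
    using tendsto_divide_zero[OF tendsto_mult_right_zero[OF tendsto_L1_gauss_conv[OF assms(3)]]] .
  have bound: "\<forall>\<^sub>F \<eta> in at_right 0. TV (piX f g \<eta>) (nu_dens f g) \<le> C * ?L1 \<eta> / Z"
    using eventually_at_right_less[of 0]
    by eventually_elim (use TV_piX_nu_dens_le[OF _ assms(3) C assms(5)] assms(1) in \<open>simp add: Z_def\<close>)
  show ?thesis
    by (rule tendsto_sandwich[OF _ bound tendsto_const lim]) (simp add: TV_nonneg)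
qed

end
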